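(* For all $m\in\mathbb{N}$ and $\boldsymbol{\mu}\in\Delta_\mathbb{N}$, with $\boldsymbol{X}\sim\boldsymbol{\mu}^m$ and $\widehat{\boldsymbol{\mu}}_m$ its empirical measure, $$\mathbb{E}\,\Phi_m(\widehat{\boldsymbol{\mu}}_m)\le 2\Lambda_m(\boldsymbol{\mu}),$$ and for every $\delta\in(0,1)$, with probability at least $1-\delta$, $$\Phi_m(\widehat{\boldsymbol{\mu}}_m)\le 2\Lambda_m(\boldsymbol{\mu})+\sqrt{\log(1/\delta)/m}.$$
   Context: $\Delta_\mathbb{N}$ is the set of probability distributions on $\mathbb{N}=\{1,2,\dots\}$. For $\boldsymbol{X}=(X_1,\dots,X_m)$ i.i.d. from $\boldsymbol{\mu}$, $\widehat{\boldsymbol{\mu}}_m(i)=\frac1m\sum_{t=1}^m\mathbb{I}\{X_t=i\}$. $\Phi_m(\widehat{\boldsymbol{\mu}}_m):=\frac1{\sqrt m}\sum_{j\in\mathbb{N}}\sqrt{\widehat{\boldsymbol{\mu}}_m(j)}$. $\Lambda_m(\boldsymbol{\mu}):=\sum_{j:\boldsymbol{\mu}(j)<1/m}\boldsymbol{\mu}(j)+\frac{1}{2\sqrt m}\sum_{j:\boldsymbol{\mu}(j)\ge 1/m}\sqrt{\boldsymbol{\mu}(j)}$. $\log$ is the natural logarithm. *)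

theory Defs
  imports "HOL-Probability.Probability"
begin

text \<open>Empirical measure of a sample X_0..X_{m-1} (indices shifted to 0..m-1).\<close>
definition emp_measure :: "nat \<Rightarrow> (nat \<Rightarrow> nat) \<Rightarrow> nat \<Rightarrow> real" where
  "emp_measure m X i = real (card {t \<in> {..<m}. X t = i}) / real m"

definition Phi :: "nat \<Rightarrow> (nat \<Rightarrow> real) \<Rightarrow> real" where
  "Phi m \<nu> = (1 / sqrt (real m)) * (\<Sum>\<^sub>\<infinity> j\<in>{1..}. sqrt (\<nu> j))"

definition Lambda :: "nat \<Rightarrow> nat pmf \<Rightarrow> real" where
  "Lambda m \<mu> = (\<Sum>\<^sub>\<infinity> j\<in>{j\<in>{1..}. pmf \<mu> j < 1 / real m}. pmf \<mu> j)
     + (1 / (2 * sqrt (real m))) * (\<Sum>\<^sub>\<infinity> j\<in>{j\<in>{1..}. pmf \<mu> j \<ge> 1 / real m}. sqrt (pmf \<mu> j))"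

definition sample_pmf :: "nat \<Rightarrow> nat pmf \<Rightarrow> (nat \<Rightarrow> nat) pmf" where
  "sample_pmf m \<mu> = Pi_pmf {..<m} 0 (\<lambda>_. \<mu>)"

end

theory Submission
  imports Defs
begin

(* Split the atoms at mass 1/m. For a light atom sqrt n \<le> n, and for a heavy atom j AM-GM gives
   sqrt n \<le> n / (2 a_j) + a_j / 2 with a_j = sqrt (m \<mu>(j)). Summed over the atoms hit by the
   sample, this bounds m \<Phi>_m by a sum of m i.i.d. bounded terms plus a constant, and the
   expectation of that bound is \<mu>(light) + m^(-1/2) \<Sigma>_heavy sqrt \<mu>(j) \<le> 2 \<Lambda>_m(\<mu>).
   Replacing one sample point raises one count and lowers another by 1, and sqrt is subadditive,
   so \<Phi>_m has bounded differences 1/m. McDiarmid's inequality, obtained from Hoeffding's lemma by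
   conditioning on all coordinates but one, then gives the tail exp (-2 m t^2), which equals
   \<delta>^2 \<le> \<delta> at t = sqrt (log (1/\<delta>) / m). *)

section \<open>McDiarmid's inequality for product distributions\<close>

lemma integrable_measure_pmf_bounded:
  fixes f :: "'a \<Rightarrow> real"
  assumes "\<And>x. \<bar>f x\<bar> \<le> B"
  shows "integrable (measure_pmf M) f"
  by (rule measure_pmf.integrable_const_bound[where B = B]) (use assms in auto)

lemma abs_expectation_le_bound:
  fixes f :: "'a \<Rightarrow> real"
  assumes "\<And>x. \<bar>f x\<bar> \<le> B"
  shows "\<bar>measure_pmf.expectation M f\<bar> \<le> B"
proof -
  have "\<bar>measure_pmf.expectation M f\<bar> \<le> measure_pmf.expectation M (\<lambda>x. \<bar>f x\<bar>)"
    by (rule integral_abs_bound)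
  also have "\<dots> \<le> measure_pmf.expectation M (\<lambda>_. B)"
    using assms order_trans[OF abs_ge_zero assms]
    by (intro integral_mono integrable_measure_pmf_bounded[where B = B]) auto
  also have "\<dots> = B"
    by simp
  finally show ?thesis .
qed

lemma abs_exp_mult_diff_le:
  fixes u a B l :: real
  assumes "\<bar>u\<bar> \<le> B" "0 \<le> l"
  shows "\<bar>exp (l * (u - a))\<bar> \<le> exp (l * (B + \<bar>a\<bar>))"
proof -
  have "u - a \<le> B + \<bar>a\<bar>"
    using assms(1) by (auto simp: abs_le_iff)
  then show ?thesis
    using assms(2) by (simp add: mult_left_mono)
qed

lemma expectation_bind_pmf:
  fixes f :: "'b \<Rightarrow> real"
  assumes "\<And>x. \<bar>f x\<bar> \<le> B"
  shows "measure_pmf.expectation (bind_pmf M N) f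
           = measure_pmf.expectation M (\<lambda>x. measure_pmf.expectation (N x) f)"
  using measurable_measure_pmf[of N] unfolding measure_pmf_bind
  by (intro integral_bind[where K = "count_space UNIV" and B = B and B' = 1])
     (auto simp: assms measure_pmf.emeasure_space_1 intro: measure_pmf.finite_measure_axioms)

lemma Pi_pmf_insert_bind:
  assumes "finite A" "i \<notin> A"
  shows "Pi_pmf (insert i A) d p = bind_pmf (Pi_pmf A d p) (\<lambda>g. map_pmf (\<lambda>y. g(i := y)) (p i))"
  unfolding Pi_pmf_insert'[OF assms] map_pmf_def by (rule bind_commute_pmf)

lemma Hoeffdings_lemma_pmf:
  fixes g :: "'a \<Rightarrow> real"
  assumes osc: "\<And>y y'. g y - g y' \<le> c" and "0 < l"
  shows "measure_pmf.expectation Q (\<lambda>y. exp (l * (g y - measure_pmf.expectation Q g)))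
           \<le> exp (l\<^sup>2 * c\<^sup>2 / 8)"
proof -
  define a where "a = (INF y. g y)"
  have "bdd_below (range g)"
    using osc[of undefined] by (intro bdd_belowI[where m = "g undefined - c"]) (auto simp: algebra_simps)
  have a_le: "a \<le> g y" and le_a: "g y \<le> a + c" for y
  proof -
    show "a \<le> g y"
      unfolding a_def using \<open>bdd_below (range g)\<close> by (rule cINF_lower) simp
    have "g y - c \<le> a"
      unfolding a_def using osc[of y] by (intro cINF_greatest) (auto simp: algebra_simps)
    then show "g y \<le> a + c"
      by simp
  qed
  interpret interval_bounded_random_variable "measure_pmf Q" g a "a + c"
    by unfold_locales (auto simp: a_le le_a)
  define E where "E = measure_pmf.expectation Q g"
  have "ennreal (measure_pmf.expectation Q (\<lambda>y. exp (l * (g y - E))))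
          = nn_integral Q (\<lambda>y. exp (l * (g y - E)))"
    using le_a \<open>0 < l\<close>
    by (intro nn_integral_eq_integral[symmetric] integrable_measure_pmf_bounded
          [where B = "exp (l * (a + c - E))"]) auto
  also have "\<dots> \<le> ennreal (exp (l\<^sup>2 * (a + c - a)\<^sup>2 / 8))"
    unfolding E_def by (rule Hoeffdings_lemma_nn_integral) fact
  finally show ?thesis
    by (simp add: E_def)
qed

lemma expectation_Pi_pmf_insert:
  fixes f :: "('i \<Rightarrow> 'a) \<Rightarrow> real"
  assumes "finite A" "i \<notin> A" "\<And>x. \<bar>f x\<bar> \<le> B"
  shows "measure_pmf.expectation (Pi_pmf (insert i A) d p) f
           = measure_pmf.expectation (Pi_pmf A d p) (\<lambda>g. measure_pmf.expectation (p i) (\<lambda>y. f (g(i := y))))"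
  unfolding Pi_pmf_insert_bind[OF assms(1,2)] by (simp add: expectation_bind_pmf[where B = B] assms(3))

lemma mgf_Pi_pmf_insert_le:
  fixes f :: "('i \<Rightarrow> 'a) \<Rightarrow> real"
  assumes "finite A" "i \<notin> A" "0 < l" "\<And>x. \<bar>f x\<bar> \<le> B"
    and "\<And>x y. \<bar>f (x(i := y)) - f x\<bar> \<le> c"
  shows "measure_pmf.expectation (Pi_pmf (insert i A) d p) (\<lambda>x. exp (l * (f x - a)))
           \<le> measure_pmf.expectation (Pi_pmf A d p)
                (\<lambda>g. exp (l * (measure_pmf.expectation (p i) (\<lambda>y. f (g(i := y))) - a)))
             * exp (l\<^sup>2 * c\<^sup>2 / 8)"
proof -
  define h where "h g = measure_pmf.expectation (p i) (\<lambda>y. f (g(i := y)))" for g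
  have h_bound: "\<bar>h g\<bar> \<le> B" for g
    unfolding h_def by (intro abs_expectation_le_bound assms(4))
  have conditional_mgf: "measure_pmf.expectation (p i) (\<lambda>y. exp (l * (f (g(i := y)) - a)))
                           \<le> exp (l * (h g - a)) * exp (l\<^sup>2 * c\<^sup>2 / 8)" for g
  proof -
    have "f (g(i := y)) - f (g(i := y')) \<le> c" for y y'
      using assms(5)[of "g(i := y')" y] by (simp add: abs_le_iff)
    then have "measure_pmf.expectation (p i) (\<lambda>y. exp (l * (f (g(i := y)) - h g))) \<le> exp (l\<^sup>2 * c\<^sup>2 / 8)"
      unfolding h_def using \<open>0 < l\<close> by (rule Hoeffdings_lemma_pmf)
    moreover have "(\<lambda>y. exp (l * (f (g(i := y)) - a)))
                     = (\<lambda>y. exp (l * (h g - a)) * exp (l * (f (g(i := y)) - h g)))"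
      by (simp add: fun_eq_iff algebra_simps flip: exp_add)
    ultimately show ?thesis
      by (simp add: mult_left_mono)
  qed
  have "measure_pmf.expectation (Pi_pmf (insert i A) d p) (\<lambda>x. exp (l * (f x - a)))
          = measure_pmf.expectation (Pi_pmf A d p)
              (\<lambda>g. measure_pmf.expectation (p i) (\<lambda>y. exp (l * (f (g(i := y)) - a))))"
    using assms(1-3)
    by (intro expectation_Pi_pmf_insert[where B = "exp (l * (B + \<bar>a\<bar>))"] abs_exp_mult_diff_le assms(4)) auto
  also have "\<dots> \<le> measure_pmf.expectation (Pi_pmf A d p) (\<lambda>g. exp (l * (h g - a)) * exp (l\<^sup>2 * c\<^sup>2 / 8))"
    using \<open>0 < l\<close>
    by (intro integral_mono conditional_mgf integrable_mult_left
          integrable_measure_pmf_bounded[where B = "exp (l * (B + \<bar>a\<bar>))"]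
          abs_expectation_le_bound abs_exp_mult_diff_le assms(4) h_bound) auto
  finally show ?thesis
    by (simp add: h_def)
qed

lemma McDiarmid_mgf_bound:
  fixes f :: "('i \<Rightarrow> 'a) \<Rightarrow> real"
  assumes "finite A" "0 < l" "\<And>x. \<bar>f x\<bar> \<le> B"
    and "\<And>x i y. i \<in> A \<Longrightarrow> \<bar>f (x(i := y)) - f x\<bar> \<le> c"
  shows "measure_pmf.expectation (Pi_pmf A d p)
           (\<lambda>x. exp (l * (f x - measure_pmf.expectation (Pi_pmf A d p) f)))
         \<le> exp (l\<^sup>2 * c\<^sup>2 * real (card A) / 8)"
  using assms(1,3,4)
proof (induction A arbitrary: f rule: finite_induct)
  case empty
  then show ?case
    by simp
next
  case (insert i A f)
  define h where "h g = measure_pmf.expectation (p i) (\<lambda>y. f (g(i := y)))" for g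
  define \<mu> where "\<mu> = measure_pmf.expectation (Pi_pmf A d p) h"
  have h_bound: "\<bar>h g\<bar> \<le> B" for g
    unfolding h_def by (intro abs_expectation_le_bound insert.prems)
  have h_diff: "\<bar>h (g(j := z)) - h g\<bar> \<le> c" if "j \<in> A" for g j z
  proof -
    have "j \<noteq> i"
      using that insert.hyps by auto
    then have "h (g(j := z)) - h g
                 = measure_pmf.expectation (p i) (\<lambda>y. f ((g(i := y))(j := z)) - f (g(i := y)))"
      unfolding h_def
      by (subst Bochner_Integration.integral_diff)
         (auto intro!: integrable_measure_pmf_bounded[where B = B] insert.prems simp: fun_upd_twist)
    also have "\<bar>\<dots>\<bar> \<le> c"
      using that by (intro abs_expectation_le_bound insert.prems) simp
    finally show ?thesis .
  qed
  have E_f: "measure_pmf.expectation (Pi_pmf (insert i A) d p) f = \<mu>"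
    unfolding \<mu>_def h_def using insert.hyps insert.prems(1) by (rule expectation_Pi_pmf_insert)
  have "measure_pmf.expectation (Pi_pmf (insert i A) d p) (\<lambda>x. exp (l * (f x - \<mu>)))
                   \<le> measure_pmf.expectation (Pi_pmf A d p) (\<lambda>g. exp (l * (h g - \<mu>))) * exp (l\<^sup>2 * c\<^sup>2 / 8)"
    unfolding h_def by (intro mgf_Pi_pmf_insert_le[where B = B] insert.hyps \<open>0 < l\<close> insert.prems) simp
  also have "\<dots> \<le> exp (l\<^sup>2 * c\<^sup>2 * real (card A) / 8) * exp (l\<^sup>2 * c\<^sup>2 / 8)"
    using insert.IH[OF h_bound h_diff] by (simp add: \<mu>_def)
  also have "\<dots> = exp (l\<^sup>2 * c\<^sup>2 * real (card (insert i A)) / 8)"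
    using insert.hyps by (simp add: field_simps flip: exp_add)
  finally show ?case
    unfolding E_f .
qed

theorem McDiarmid_inequality:
  fixes f :: "('i \<Rightarrow> 'a) \<Rightarrow> real"
  assumes "finite A" "\<And>x. \<bar>f x\<bar> \<le> B"
    and "\<And>x i y. i \<in> A \<Longrightarrow> \<bar>f (x(i := y)) - f x\<bar> \<le> c"
    and "0 \<le> t"
  shows "measure_pmf.prob (Pi_pmf A d p) {x. measure_pmf.expectation (Pi_pmf A d p) f + t \<le> f x}
           \<le> exp (- 2 * t\<^sup>2 / (real (card A) * c\<^sup>2))"
proof (cases "0 < t \<and> 0 < real (card A) * c\<^sup>2")
  case False
  moreover have "0 \<le> real (card A) * c\<^sup>2"
    by simp
  ultimately have "exp (- 2 * t\<^sup>2 / (real (card A) * c\<^sup>2)) = 1"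
    using \<open>0 \<le> t\<close> by fastforce
  then show ?thesis
    by (metis measure_pmf.prob_le_1)
next
  case True
  define M where "M = Pi_pmf A d p"
  define E where "E = measure_pmf.expectation M f"
  define n where "n = real (card A) * c\<^sup>2"
  define l where "l = 4 * t / n"
  have "0 < n" "0 < l"
    using True by (simp_all add: n_def l_def)
  have "{x. E + t \<le> f x} = {x \<in> space (measure_pmf M). exp (l * t) \<le> exp (l * (f x - E))}"
    using \<open>0 < l\<close> by auto
  then have "measure_pmf.prob M {x. E + t \<le> f x}
               = measure_pmf.prob M {x \<in> space (measure_pmf M). exp (l * t) \<le> exp (l * (f x - E))}"
    by simp
  also have "\<dots> \<le> measure_pmf.expectation M (\<lambda>x. exp (l * (f x - E))) / exp (l * t)"
    using \<open>0 < l\<close> assms(2)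
    by (intro integral_Markov_inequality_measure[where A = UNIV]
          integrable_measure_pmf_bounded[where B = "exp (l * (B + \<bar>E\<bar>))"] abs_exp_mult_diff_le) auto
  also have "\<dots> \<le> exp (l\<^sup>2 * c\<^sup>2 * real (card A) / 8) / exp (l * t)"
    unfolding M_def E_def using \<open>0 < l\<close> assms by (intro divide_right_mono McDiarmid_mgf_bound) auto
  also have "\<dots> = exp (- 2 * t\<^sup>2 / n)"
    using \<open>0 < n\<close> by (simp add: l_def n_def field_simps power2_eq_square flip: exp_diff)
  finally show ?thesis
    unfolding M_def E_def n_def .
qed

section \<open>The square-root functional of an empirical measure\<close>

definition occurrences :: "nat \<Rightarrow> (nat \<Rightarrow> nat) \<Rightarrow> nat \<Rightarrow> nat" where
  "occurrences m X j = card {t \<in> {..<m}. X t = j}"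

lemma sum_sample_eq_sum_occurrences:
  fixes u :: "nat \<Rightarrow> real"
  shows "(\<Sum>t<m. u (X t)) = (\<Sum>j\<in>X ` {..<m}. real (occurrences m X j) * u j)"
proof -
  have "(\<Sum>t<m. u (X t)) = (\<Sum>j\<in>X ` {..<m}. \<Sum>t\<in>{t \<in> {..<m}. X t = j}. u (X t))"
    by (rule sum.image_gen) simp
  also have "\<dots> = (\<Sum>j\<in>X ` {..<m}. real (occurrences m X j) * u j)"
    unfolding occurrences_def by (intro sum.cong) auto
  finally show ?thesis .
qed

lemma Phi_emp_measure_eq_sum:
  assumes "1 \<le> m" "finite K" "X ` {..<m} \<inter> {1..} \<subseteq> K" "K \<subseteq> {1..}"
  shows "Phi m (emp_measure m X) = (\<Sum>j\<in>K. sqrt (real (occurrences m X j))) / real m"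
proof -
  have "(\<Sum>\<^sub>\<infinity> j\<in>{1..}. sqrt (emp_measure m X j)) = (\<Sum>\<^sub>\<infinity> j\<in>K. sqrt (emp_measure m X j))"
    using assms(3,4)
    by (intro infsum_cong_neutral) (auto simp: emp_measure_def card_eq_0_iff)
  also have "\<dots> = (\<Sum>j\<in>K. sqrt (real (occurrences m X j))) / sqrt (real m)"
    using assms(2)
    by (simp add: emp_measure_def occurrences_def real_sqrt_divide sum_divide_distrib)
  finally show ?thesis
    using assms(1) by (simp add: Phi_def real_sqrt_mult[symmetric])
qed

lemma sqrt_of_nat_le: "sqrt (real n) \<le> real n"
  by (cases n) (auto simp: real_sqrt_le_iff' power2_eq_square)

lemma Phi_emp_measure_le_linear:
  fixes w b :: "nat \<Rightarrow> real"
  assumes "1 \<le> m" "finite F" "\<And>j. 0 \<le> w j" "\<And>j. j \<in> F \<Longrightarrow> 0 \<le> b j"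
    and linear_bound: "\<And>j n. sqrt (real n) \<le> real n * w j + (if j \<in> F then b j else 0)"
  shows "Phi m (emp_measure m X) \<le> ((\<Sum>t<m. w (X t)) + (\<Sum>j\<in>F. b j)) / real m"
proof -
  define K where "K = X ` {..<m} \<inter> {1..}"
  have "finite K"
    by (simp add: K_def)
  have "(\<Sum>j\<in>K. sqrt (real (occurrences m X j)))
          \<le> (\<Sum>j\<in>K. real (occurrences m X j) * w j + (if j \<in> F then b j else 0))"
    by (intro sum_mono linear_bound)
  also have "\<dots> = (\<Sum>j\<in>K. real (occurrences m X j) * w j) + (\<Sum>j\<in>K \<inter> F. b j)"
    using \<open>finite K\<close> by (simp add: sum.distrib sum.inter_restrict)
  also have "\<dots> \<le> (\<Sum>j\<in>X ` {..<m}. real (occurrences m X j) * w j) + (\<Sum>j\<in>F. b j)"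
    using assms(2-4) by (intro add_mono sum_mono2) (auto simp: K_def)
  also have "\<dots> = (\<Sum>t<m. w (X t)) + (\<Sum>j\<in>F. b j)"
    by (simp add: sum_sample_eq_sum_occurrences)
  finally show ?thesis
    using assms(1) \<open>finite K\<close>
    by (simp add: Phi_emp_measure_eq_sum[where K = K] K_def divide_right_mono)
qed

lemma Phi_emp_measure_nonneg: "0 \<le> Phi m (emp_measure m X)"
  unfolding Phi_def by (intro mult_nonneg_nonneg infsum_nonneg) (auto simp: emp_measure_def)

lemma Phi_emp_measure_le_one:
  assumes "1 \<le> m"
  shows "Phi m (emp_measure m X) \<le> 1"
  using Phi_emp_measure_le_linear[where w = "\<lambda>_. 1" and F = "{}", OF assms] assms
  by (simp add: sqrt_of_nat_le)

lemma occurrences_fun_upd_le: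
  "occurrences m (X(t := y)) j \<le> occurrences m X j + (if y = j then 1 else 0)"
proof (cases "y = j")
  case True
  have "{s \<in> {..<m}. (X(t := y)) s = j} \<subseteq> insert t {s \<in> {..<m}. X s = j}"
    by auto
  then have "occurrences m (X(t := y)) j \<le> card (insert t {s \<in> {..<m}. X s = j})"
    unfolding occurrences_def by (intro card_mono) auto
  also have "\<dots> \<le> occurrences m X j + 1"
    unfolding occurrences_def by (simp add: card_insert_if)
  finally show ?thesis
    using True by simp
next
  case False
  then have "{s \<in> {..<m}. (X(t := y)) s = j} \<subseteq> {s \<in> {..<m}. X s = j}"
    by auto
  then show ?thesis
    using False unfolding occurrences_def by (simp add: card_mono)
qed

lemma Phi_emp_measure_fun_upd_le:
  assumes "1 \<le> m"
  shows "Phi m (emp_measure m (X(t := y))) \<le> Phi m (emp_measure m X) + 1 / real m"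
proof -
  define K where "K = insert y (X ` {..<m}) \<inter> {1..}"
  have "finite K"
    by (simp add: K_def)
  have "(\<Sum>j\<in>K. sqrt (real (occurrences m (X(t := y)) j)))
          \<le> (\<Sum>j\<in>K. sqrt (real (occurrences m X j)) + (if y = j then 1 else 0))"
  proof (intro sum_mono)
    fix j
    have "sqrt (real (occurrences m (X(t := y)) j))
            \<le> sqrt (real (occurrences m X j) + (if y = j then 1 else 0))"
      by (intro real_sqrt_le_mono) (use of_nat_mono[OF occurrences_fun_upd_le[of m X t y j]] in auto)
    also have "\<dots> \<le> sqrt (real (occurrences m X j)) + (if y = j then 1 else 0)"
      using sqrt_add_le_add_sqrt[of "real (occurrences m X j)" 1] by simp
    finally show "sqrt (real (occurrences m (X(t := y)) j))
                    \<le> sqrt (real (occurrences m X j)) + (if y = j then 1 else 0)" .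
  qed
  also have "\<dots> \<le> (\<Sum>j\<in>K. sqrt (real (occurrences m X j))) + 1"
    using \<open>finite K\<close> by (simp add: sum.distrib)
  finally have "(\<Sum>j\<in>K. sqrt (real (occurrences m (X(t := y)) j))) / real m
                  \<le> (\<Sum>j\<in>K. sqrt (real (occurrences m X j))) / real m + 1 / real m"
    by (simp add: divide_right_mono flip: add_divide_distrib)
  moreover have "Phi m (emp_measure m (X(t := y)))
                   = (\<Sum>j\<in>K. sqrt (real (occurrences m (X(t := y)) j))) / real m"
    using assms \<open>finite K\<close> by (intro Phi_emp_measure_eq_sum) (auto simp: K_def)
  moreover have "Phi m (emp_measure m X) = (\<Sum>j\<in>K. sqrt (real (occurrences m X j))) / real m"
    using assms \<open>finite K\<close> by (intro Phi_emp_measure_eq_sum) (auto simp: K_def)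
  ultimately show ?thesis
    by simp
qed

lemma Phi_emp_measure_fun_upd_diff:
  assumes "1 \<le> m"
  shows "\<bar>Phi m (emp_measure m (X(t := y))) - Phi m (emp_measure m X)\<bar> \<le> 1 / real m"
  using Phi_emp_measure_fun_upd_le[OF assms, of X t y]
    Phi_emp_measure_fun_upd_le[OF assms, of "X(t := y)" t "X t"]
  by simp

section \<open>Bounds for an i.i.d. sample\<close>

lemma expectation_sample_pmf_component:
  fixes w :: "nat \<Rightarrow> real"
  assumes "t < m"
  shows "measure_pmf.expectation (sample_pmf m \<mu>) (\<lambda>X. w (X t)) = measure_pmf.expectation \<mu> w"
proof -
  have "map_pmf (\<lambda>X. X t) (sample_pmf m \<mu>) = \<mu>"
    unfolding sample_pmf_def using assms by (simp add: Pi_pmf_component)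
  then show ?thesis
    by (metis integral_map_pmf)
qed

lemma finite_pmf_ge_inverse:
  assumes "0 < n"
  shows "finite {j. 1 / real n \<le> pmf \<mu> j}"
proof -
  have "finite {j. 1 / real n \<le> pmf \<mu> j} \<and> card {j. 1 / real n \<le> pmf \<mu> j} \<le> n"
  proof (rule finite_if_finite_subsets_card_bdd)
    fix G
    assume G: "G \<subseteq> {j. 1 / real n \<le> pmf \<mu> j}" "finite G"
    have "real (card G) / real n = (\<Sum>j\<in>G. 1 / real n)"
      by simp
    also have "\<dots> \<le> (\<Sum>j\<in>G. pmf \<mu> j)"
      using G(1) by (intro sum_mono) auto
    also have "\<dots> = measure_pmf.prob \<mu> G"
      using G(2) by (simp add: measure_measure_pmf_finite)
    also have "\<dots> \<le> 1"
      by simp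
    finally show "card G \<le> n"
      using assms by (simp add: field_simps)
  qed
  then show ?thesis
    by simp
qed

lemma Lambda_eq_finite_sum:
  "Lambda m \<mu> = measure_pmf.prob \<mu> {j \<in> {1..}. pmf \<mu> j < 1 / real m}
     + (\<Sum>j\<in>{j \<in> {1..}. 1 / real m \<le> pmf \<mu> j}. sqrt (pmf \<mu> j)) / (2 * sqrt (real m))"
proof (cases "m = 0")
  case True
  then show ?thesis
    by (simp add: Lambda_def)
next
  case False
  then have "finite {j \<in> {1..}. 1 / real m \<le> pmf \<mu> j}"
    using finite_pmf_ge_inverse[of m \<mu>] by (simp add: finite_subset[rotated])
  then show ?thesis
    by (simp add: Lambda_def measure_pmf_conv_infsetsum infsetsum_infsum[OF pmf_abs_summable])
qed

lemma sqrt_le_AM_GM: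
  assumes "0 < a" "0 \<le> x"
  shows "sqrt x \<le> x / (2 * a) + a / 2"
proof -
  have "sqrt x = sqrt (x / a * a)"
    using assms by simp
  also have "\<dots> \<le> (x / a + a) / 2"
    using assms by (intro arith_geo_mean_sqrt) auto
  finally show ?thesis
    by (simp add: add_divide_distrib)
qed

lemma expectation_Phi_emp_measure_le_linear:
  fixes w b :: "nat \<Rightarrow> real"
  assumes "1 \<le> m" "finite F" "\<And>j. 0 \<le> w j" "\<And>j. w j \<le> B" "\<And>j. j \<in> F \<Longrightarrow> 0 \<le> b j"
    and linear_bound: "\<And>j n. sqrt (real n) \<le> real n * w j + (if j \<in> F then b j else 0)"
  shows "measure_pmf.expectation (sample_pmf m \<mu>) (\<lambda>X. Phi m (emp_measure m X))
           \<le> measure_pmf.expectation \<mu> w + (\<Sum>j\<in>F. b j) / real m"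
proof -
  let ?P = "measure_pmf (sample_pmf m \<mu>)"
  have integrable_w: "integrable ?P (\<lambda>X. w (X t))" for t
    using assms(3,4) by (intro integrable_measure_pmf_bounded[where B = B]) (simp add: abs_le_iff)
  have "integral\<^sup>L ?P (\<lambda>X. Phi m (emp_measure m X))
          \<le> integral\<^sup>L ?P (\<lambda>X. ((\<Sum>t<m. w (X t)) + (\<Sum>j\<in>F. b j)) / real m)"
  proof (rule integral_mono)
    show "integrable ?P (\<lambda>X. Phi m (emp_measure m X))"
      using assms(1) Phi_emp_measure_nonneg Phi_emp_measure_le_one
      by (intro integrable_measure_pmf_bounded[where B = 1]) (simp add: abs_le_iff)
    show "integrable ?P (\<lambda>X. ((\<Sum>t<m. w (X t)) + (\<Sum>j\<in>F. b j)) / real m)"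
      by (simp add: integrable_w)
    show "Phi m (emp_measure m X) \<le> ((\<Sum>t<m. w (X t)) + (\<Sum>j\<in>F. b j)) / real m" for X
      using assms by (intro Phi_emp_measure_le_linear) auto
  qed
  also have "\<dots> = measure_pmf.expectation \<mu> w + (\<Sum>j\<in>F. b j) / real m"
    using assms(1) by (simp add: integrable_w expectation_sample_pmf_component add_divide_distrib)
  finally show ?thesis .
qed

lemma expectation_one_outside_finite:
  fixes v :: "'a \<Rightarrow> real"
  assumes "finite H"
  shows "measure_pmf.expectation \<mu> (\<lambda>j. if j \<in> H then v j else 1)
           = measure_pmf.prob \<mu> (- H) + (\<Sum>j\<in>H. v j * pmf \<mu> j)"
proof -
  define u where "u j = (if j \<in> H then v j else 0)" for j
  have "\<bar>u j\<bar> \<le> (\<Sum>k\<in>H. \<bar>v k\<bar>)" for j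
    using assms by (auto simp: u_def intro: member_le_sum)
  then have "integrable (measure_pmf \<mu>) u"
    by (rule integrable_measure_pmf_bounded)
  moreover have "(\<lambda>j. if j \<in> H then v j else 1) = (\<lambda>j. indicator (- H) j + u j)"
    by (auto simp: fun_eq_iff u_def)
  ultimately have "measure_pmf.expectation \<mu> (\<lambda>j. if j \<in> H then v j else 1)
                     = measure_pmf.prob \<mu> (- H) + measure_pmf.expectation \<mu> u"
    by (simp add: Bochner_Integration.integral_add integrable_measure_pmf_bounded[where B = 1])
  also have "measure_pmf.expectation \<mu> u = (\<Sum>j\<in>H. v j * pmf \<mu> j)"
    using assms by (subst integral_measure_pmf_real[where A = H]) (auto simp: u_def split: if_splits)
  finally show ?thesis .
qed

lemma expectation_Phi_emp_measure_le:
  assumes "1 \<le> m" "set_pmf \<mu> \<subseteq> {1..}"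
  shows "measure_pmf.expectation (sample_pmf m \<mu>) (\<lambda>X. Phi m (emp_measure m X)) \<le> 2 * Lambda m \<mu>"
proof -
  define H where "H = {j \<in> {1..}. 1 / real m \<le> pmf \<mu> j}"
  \<comment> \<open>a j is the square root of the expected number of occurrences of the heavy atom j.\<close>
  define a where "a j = sqrt (real m * pmf \<mu> j)" for j
  have "finite H"
    using finite_pmf_ge_inverse[of m \<mu>] assms(1) by (simp add: H_def finite_subset[rotated])
  have a_ge_1: "1 \<le> a j" if "j \<in> H" for j
    using that assms(1) by (auto simp: a_def H_def field_simps intro: real_sqrt_ge_one)
  have "measure_pmf.expectation (sample_pmf m \<mu>) (\<lambda>X. Phi m (emp_measure m X))
          \<le> measure_pmf.expectation \<mu> (\<lambda>j. if j \<in> H then 1 / (2 * a j) else 1) + (\<Sum>j\<in>H. a j / 2) / real m"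
  proof (rule expectation_Phi_emp_measure_le_linear[where B = 1])
    fix j n
    show "sqrt (real n) \<le> real n * (if j \<in> H then 1 / (2 * a j) else 1) + (if j \<in> H then a j / 2 else 0)"
      using a_ge_1[of j] sqrt_le_AM_GM[of "a j" "real n"] by (auto simp: sqrt_of_nat_le)
  qed (use assms(1) \<open>finite H\<close> in \<open>auto simp: field_simps dest: a_ge_1\<close>)
  also have "\<dots> = measure_pmf.prob \<mu> (- H) + (\<Sum>j\<in>H. sqrt (pmf \<mu> j)) / sqrt (real m)"
  proof -
    have "1 / (2 * a j) * pmf \<mu> j + a j / 2 / real m = sqrt (pmf \<mu> j) / sqrt (real m)" if "j \<in> H" for j
    proof -
      have "0 < pmf \<mu> j"
        using that assms(1) by (auto simp: H_def intro: less_le_trans[of 0 "1 / real m"])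
      then show ?thesis
        using assms(1) by (simp add: a_def real_sqrt_mult field_simps)
    qed
    then show ?thesis
      using \<open>finite H\<close>
      by (simp add: expectation_one_outside_finite sum_divide_distrib flip: sum.distrib)
  qed
  also have "measure_pmf.prob \<mu> (- H) = measure_pmf.prob \<mu> {j \<in> {1..}. pmf \<mu> j < 1 / real m}"
  proof -
    have "- H \<inter> set_pmf \<mu> = {j \<in> {1..}. pmf \<mu> j < 1 / real m} \<inter> set_pmf \<mu>"
      using assms(2) by (auto simp: H_def)
    then show ?thesis
      by (metis measure_Int_set_pmf)
  qed
  finally show ?thesis
    unfolding Lambda_eq_finite_sum H_def
    using measure_nonneg[of "measure_pmf \<mu>" "{j \<in> {1..}. pmf \<mu> j < 1 / real m}"]
    by (simp add: distrib_left del: measure_nonneg)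
qed

lemma Phi_emp_measure_deviation:
  assumes "1 \<le> m" "0 < \<delta>" "\<delta> < 1"
  shows "1 - \<delta> \<le> measure_pmf.prob (sample_pmf m \<mu>)
           {X. Phi m (emp_measure m X)
                 \<le> measure_pmf.expectation (sample_pmf m \<mu>) (\<lambda>X. Phi m (emp_measure m X))
                    + sqrt (ln (1 / \<delta>) / real m)}"
proof -
  let ?P = "sample_pmf m \<mu>" and ?f = "\<lambda>X. Phi m (emp_measure m X)"
  define t where "t = sqrt (ln (1 / \<delta>) / real m)"
  define A where "A = {X. measure_pmf.expectation ?P ?f + t \<le> ?f X}"
  have "0 \<le> t"
    using assms by (simp add: t_def)
  have "measure_pmf.prob ?P A \<le> exp (- 2 * t\<^sup>2 / (real (card {..<m}) * (1 / real m)\<^sup>2))"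
    unfolding A_def sample_pmf_def
    using assms(1) \<open>0 \<le> t\<close> Phi_emp_measure_nonneg Phi_emp_measure_le_one Phi_emp_measure_fun_upd_diff
    by (intro McDiarmid_inequality[where B = 1]) (auto simp: abs_le_iff)
  also have "\<dots> = exp (- 2 * (real m * t\<^sup>2))"
    using assms(1) by (simp add: power2_eq_square field_simps)
  also have "real m * t\<^sup>2 = ln (1 / \<delta>)"
    using assms by (simp add: t_def)
  also have "exp (- 2 * ln (1 / \<delta>)) = exp (ln \<delta> + ln \<delta>)"
    by (simp add: ln_div)
  also have "\<dots> = \<delta>\<^sup>2"
    using assms by (simp only: exp_add exp_ln power2_eq_square)
  also have "\<dots> \<le> \<delta>"
    using assms by (simp add: power2_eq_square mult_le_cancel_right1)
  finally have "measure_pmf.prob ?P A \<le> \<delta>" .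
  moreover have "measure_pmf.prob ?P (UNIV - A)
                   \<le> measure_pmf.prob ?P {X. ?f X \<le> measure_pmf.expectation ?P ?f + t}"
    by (intro measure_pmf.finite_measure_mono) (auto simp: A_def)
  ultimately show ?thesis
    using measure_pmf.prob_compl[of A ?P] unfolding t_def by simp
qed

theorem theorem3:
  fixes m :: nat and \<mu> :: "nat pmf"
  assumes "m \<ge> 1"
    and "set_pmf \<mu> \<subseteq> {1..}"
  shows "measure_pmf.expectation (sample_pmf m \<mu>) (\<lambda>X. Phi m (emp_measure m X))
           \<le> 2 * Lambda m \<mu>
       \<and> (\<forall>\<delta>::real. 0 < \<delta> \<and> \<delta> < 1 \<longrightarrow>
            measure_pmf.prob (sample_pmf m \<mu>)
              {X. Phi m (emp_measure m X) \<le> 2 * Lambda m \<mu> + sqrt (ln (1 / \<delta>) / real m)}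
            \<ge> 1 - \<delta>)"
proof -
  let ?P = "sample_pmf m \<mu>" and ?f = "\<lambda>X. Phi m (emp_measure m X)"
  have mean: "measure_pmf.expectation ?P ?f \<le> 2 * Lambda m \<mu>"
    using assms by (rule expectation_Phi_emp_measure_le)
  have "1 - \<delta> \<le> measure_pmf.prob ?P {X. ?f X \<le> 2 * Lambda m \<mu> + sqrt (ln (1 / \<delta>) / real m)}"
    if "0 < \<delta>" "\<delta> < 1" for \<delta>
  proof -
    let ?s = "sqrt (ln (1 / \<delta>) / real m)"
    have "1 - \<delta> \<le> measure_pmf.prob ?P {X. ?f X \<le> measure_pmf.expectation ?P ?f + ?s}"
      using assms(1) that by (rule Phi_emp_measure_deviation)
    also have "\<dots> \<le> measure_pmf.prob ?P {X. ?f X \<le> 2 * Lambda m \<mu> + ?s}"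
      using mean by (intro measure_pmf.finite_measure_mono) auto
    finally show ?thesis .
  qed
  with mean show ?thesis
    by blast
qed

end
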